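(* Let $\delta>0$ and let $S=\{p_1,\dots,p_n\}$ be a set of $n$ points in $\mathbb{R}^d$. Determining all pairs $i\ne j$ such that $\|p_i-p_j\|_\infty\le\delta$ can be done using $O(dn\log n)$ pairwise comparisons of real numbers (i.e., by a 2-linear decision tree of depth $O(dn\log n)$).
   Context: $\|x\|_\infty=\max_k |x[k]|$. A $k$-linear decision tree is one in which each branching is based on the sign of a linear expression with at most $k$ terms; its complexity is its depth. *)

theory Defs
  imports Complex_Main
begin

text \<open>An internal node carries a linear expression
  c0 + a1*x_v1 + ... + am*x_vm (stored as the constant c0 and the list of
  (variable, coefficient) terms) and branches three ways on its sign
  (negative / zero / positive).\<close>

datatype ('v, 'o) ldt =
    Leaf 'o
  | Node "real \<times> ('v \<times> real) list" "('v, 'o) ldt" "('v, 'o) ldt" "('v, 'o) ldt"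

definition lin_val :: "('v \<Rightarrow> real) \<Rightarrow> real \<times> ('v \<times> real) list \<Rightarrow> real" where
  "lin_val x e = fst e + sum_list (map (\<lambda>(v, a). a * x v) (snd e))"

fun eval_ldt :: "('v \<Rightarrow> real) \<Rightarrow> ('v, 'o) ldt \<Rightarrow> 'o" where
  "eval_ldt x (Leaf r) = r"
| "eval_ldt x (Node e tn tz tp) =
     (if lin_val x e < 0 then eval_ldt x tn
      else if lin_val x e = 0 then eval_ldt x tz
      else eval_ldt x tp)"

fun depth_ldt :: "('v, 'o) ldt \<Rightarrow> nat" where
  "depth_ldt (Leaf r) = 0"
| "depth_ldt (Node e tn tz tp) = Suc (max (depth_ldt tn) (max (depth_ldt tz) (depth_ldt tp)))"

fun k_linear :: "nat \<Rightarrow> ('v, 'o) ldt \<Rightarrow> bool" where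
  "k_linear k (Leaf r) = True"
| "k_linear k (Node e tn tz tp) =
     (length (snd e) \<le> k \<and> k_linear k tn \<and> k_linear k tz \<and> k_linear k tp)"

definition linf_dist :: "nat \<Rightarrow> (nat \<Rightarrow> real) \<Rightarrow> (nat \<Rightarrow> real) \<Rightarrow> real" where
  "linf_dist d x y = Max ((\<lambda>k. \<bar>x k - y k\<bar>) ` {..<d})"

end

theory Submission
  imports Defs "HOL-Library.Discrete_Functions"
begin

(* For each coordinate k, merge sort the 2n numbers p_i k and p_j k + \<delta> with a
  comparison tree; every comparison is a difference of two input variables plus a constant,
  so the tree is 2-linear, and merge sort needs O(n log n) comparisons.
  Ties are broken so that unshifted values come first; then p_i k \<le> p_j k + \<delta> holds exactly
  when p_i k precedes p_j k + \<delta> in the sorted list, which can be read off at the leaf.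
  Running the d sorting trees one after another and intersecting the answers for (i, j) and
  (j, i) over all coordinates yields the pairs at sup-distance at most \<delta>. *)

type_synonym 'v lin_expr = "real \<times> ('v \<times> real) list"

fun bind_ldt :: "('v, 'a) ldt \<Rightarrow> ('a \<Rightarrow> ('v, 'b) ldt) \<Rightarrow> ('v, 'b) ldt" where
  "bind_ldt (Leaf r) f = f r"
| "bind_ldt (Node e tn tz tp) f = Node e (bind_ldt tn f) (bind_ldt tz f) (bind_ldt tp f)"

lemma eval_bind_ldt: "eval_ldt x (bind_ldt T f) = eval_ldt x (f (eval_ldt x T))"
  by (induction T) auto

lemma set2_bind_ldt: "set2_ldt (bind_ldt T f) = (\<Union>r\<in>set2_ldt T. set2_ldt (f r))"
  by (induction T) auto

lemma depth_bind_ldt_le: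
  assumes "\<And>r. r \<in> set2_ldt T \<Longrightarrow> depth_ldt (f r) \<le> m"
  shows "depth_ldt (bind_ldt T f) \<le> depth_ldt T + m"
  using assms by (induction T) (fastforce simp: max_def)+

lemma depth_bind_ldt_Leaf [simp]: "depth_ldt (bind_ldt T (\<lambda>r. Leaf (f r))) = depth_ldt T"
  by (induction T) auto

lemma k_linear_bind_ldt:
  "k_linear k T \<Longrightarrow> (\<And>r. r \<in> set2_ldt T \<Longrightarrow> k_linear k (f r)) \<Longrightarrow> k_linear k (bind_ldt T f)"
  by (induction T) auto

fun merge_by :: "('a \<Rightarrow> 'a \<Rightarrow> bool) \<Rightarrow> 'a list \<Rightarrow> 'a list \<Rightarrow> 'a list" where
  "merge_by R [] ys = ys"
| "merge_by R xs [] = xs"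
| "merge_by R (x # xs) (y # ys) =
     (if R x y then x # merge_by R xs (y # ys) else y # merge_by R (x # xs) ys)"

lemma set_merge_by [simp]: "set (merge_by R xs ys) = set xs \<union> set ys"
  by (induction R xs ys rule: merge_by.induct) auto

lemma sorted_wrt_merge_by:
  "(\<And>a b. R a b \<or> R b a) \<Longrightarrow> transp R \<Longrightarrow> sorted_wrt R xs \<Longrightarrow> sorted_wrt R ys \<Longrightarrow>
   sorted_wrt R (merge_by R xs ys)"
proof (induction R xs ys rule: merge_by.induct)
  case (3 R x xs y ys)
  note trans = transpD[OF \<open>transp R\<close>]
  show ?case
  proof (cases "R x y")
    case True
    with 3 show ?thesis by (auto intro: trans[of x y])
  next
    case False
    then have "R y x" using "3.prems"(1) by blast
    with 3 False show ?thesis by (auto intro: trans[of y x])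
  qed
qed auto

(* The comparison tree of u and w branches on E u w, which plays the role of u - w;
  a zero outcome is resolved by the tie-breaking predicate. *)
definition branch_le ::
    "('i \<Rightarrow> 'i \<Rightarrow> 'v lin_expr) \<Rightarrow> ('i \<Rightarrow> 'i \<Rightarrow> bool) \<Rightarrow> ('v \<Rightarrow> real) \<Rightarrow> 'i \<Rightarrow> 'i \<Rightarrow> bool" where
  "branch_le E tie x u w \<longleftrightarrow> lin_val x (E u w) < 0 \<or> (lin_val x (E u w) = 0 \<and> tie u w)"

fun merge_ldt ::
    "('i \<Rightarrow> 'i \<Rightarrow> 'v lin_expr) \<Rightarrow> ('i \<Rightarrow> 'i \<Rightarrow> bool) \<Rightarrow> 'i list \<Rightarrow> 'i list \<Rightarrow> ('v, 'i list) ldt" where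
  "merge_ldt E tie [] ys = Leaf ys"
| "merge_ldt E tie xs [] = Leaf xs"
| "merge_ldt E tie (x # xs) (y # ys) =
     Node (E x y)
       (bind_ldt (merge_ldt E tie xs (y # ys)) (\<lambda>zs. Leaf (x # zs)))
       (if tie x y then bind_ldt (merge_ldt E tie xs (y # ys)) (\<lambda>zs. Leaf (x # zs))
        else bind_ldt (merge_ldt E tie (x # xs) ys) (\<lambda>zs. Leaf (y # zs)))
       (bind_ldt (merge_ldt E tie (x # xs) ys) (\<lambda>zs. Leaf (y # zs)))"

lemma eval_merge_ldt: "eval_ldt x (merge_ldt E tie xs ys) = merge_by (branch_le E tie x) xs ys"
  by (induction E tie xs ys rule: merge_ldt.induct) (auto simp: branch_le_def eval_bind_ldt)

lemma length_set2_merge_ldt: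
  "zs \<in> set2_ldt (merge_ldt E tie xs ys) \<Longrightarrow> length zs = length xs + length ys"
  by (induction E tie xs ys arbitrary: zs rule: merge_ldt.induct) (auto simp: set2_bind_ldt split: if_splits)

lemma depth_merge_ldt_le: "depth_ldt (merge_ldt E tie xs ys) \<le> length xs + length ys"
  by (induction E tie xs ys rule: merge_ldt.induct) (auto simp: max_def)

lemma k_linear_merge_ldt:
  "(\<And>u w. length (snd (E u w)) \<le> k) \<Longrightarrow> k_linear k (merge_ldt E tie xs ys)"
  by (induction E tie xs ys rule: merge_ldt.induct) (auto intro!: k_linear_bind_ldt)

function sort_ldt ::
    "('i \<Rightarrow> 'i \<Rightarrow> 'v lin_expr) \<Rightarrow> ('i \<Rightarrow> 'i \<Rightarrow> bool) \<Rightarrow> 'i list \<Rightarrow> ('v, 'i list) ldt" where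
  "sort_ldt E tie xs =
     (if length xs \<le> 1 then Leaf xs
      else bind_ldt (sort_ldt E tie (take (length xs div 2) xs)) (\<lambda>ls.
           bind_ldt (sort_ldt E tie (drop (length xs div 2) xs)) (\<lambda>rs. merge_ldt E tie ls rs)))"
  by pat_completeness auto
termination by (relation "measure (\<lambda>(E, tie, xs). length xs)") auto

declare sort_ldt.simps [simp del]

lemma length_set2_sort_ldt: "zs \<in> set2_ldt (sort_ldt E tie xs) \<Longrightarrow> length zs = length xs"
proof (induction E tie xs arbitrary: zs rule: sort_ldt.induct)
  case (1 E tie xs)
  show ?case
  proof (cases "length xs \<le> 1")
    case True
    with "1.prems" show ?thesis by (simp add: sort_ldt.simps[of E tie xs])
  next
    case False
    with "1.prems" obtain ls rs where sorted_halves: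
      "ls \<in> set2_ldt (sort_ldt E tie (take (length xs div 2) xs))"
      "rs \<in> set2_ldt (sort_ldt E tie (drop (length xs div 2) xs))"
      "zs \<in> set2_ldt (merge_ldt E tie ls rs)"
      unfolding sort_ldt.simps[of E tie xs] by (auto simp: set2_bind_ldt)
    have "length ls = length (take (length xs div 2) xs)" "length rs = length (drop (length xs div 2) xs)"
      using "1.IH" False sorted_halves by blast+
    with False length_set2_merge_ldt[OF sorted_halves(3)] show ?thesis by simp
  qed
qed

lemma eval_sort_ldt:
  fixes E :: "'i \<Rightarrow> 'i \<Rightarrow> 'v lin_expr" and tie x
  defines "R \<equiv> branch_le E tie x"
  assumes "\<And>a b. R a b \<or> R b a" and "transp R"
  shows "set (eval_ldt x (sort_ldt E tie xs)) = set xs \<and> sorted_wrt R (eval_ldt x (sort_ldt E tie xs))"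
proof (induction xs rule: length_induct)
  case (1 xs)
  show ?case
  proof (cases "length xs \<le> 1")
    case True
    then show ?thesis by (cases xs) (auto simp: sort_ldt.simps[of E tie])
  next
    case False
    define l where "l = take (length xs div 2) xs"
    define r where "r = drop (length xs div 2) xs"
    have "eval_ldt x (sort_ldt E tie xs) =
          merge_by R (eval_ldt x (sort_ldt E tie l)) (eval_ldt x (sort_ldt E tie r))"
      using False by (simp add: sort_ldt.simps[of E tie xs] eval_bind_ldt eval_merge_ldt R_def l_def r_def)
    moreover have "set l \<union> set r = set xs"
      unfolding l_def r_def by (metis append_take_drop_id set_append)
    moreover have "length l < length xs" "length r < length xs"
      using False by (auto simp: l_def r_def)
    ultimately show ?thesis
      using "1.IH" sorted_wrt_merge_by[OF assms(2,3)] by simp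
  qed
qed

lemma depth_sort_ldt_le:
  "length xs \<le> 2 ^ L \<Longrightarrow> depth_ldt (sort_ldt E tie xs) \<le> length xs * L"
proof (induction E tie xs arbitrary: L rule: sort_ldt.induct)
  case (1 E tie xs)
  show ?case
  proof (cases "length xs \<le> 1")
    case True
    then show ?thesis by (simp add: sort_ldt.simps[of E tie xs])
  next
    case False
    define l where "l = take (length xs div 2) xs"
    define r where "r = drop (length xs div 2) xs"
    obtain L' where L': "L = Suc L'"
      using "1.prems" False by (cases L) auto
    have "length l \<le> 2 ^ L'" "length r \<le> 2 ^ L'"
      using "1.prems" L' by (auto simp: l_def r_def)
    then have IH: "depth_ldt (sort_ldt E tie l) \<le> length l * L'"
        "depth_ldt (sort_ldt E tie r) \<le> length r * L'"
      using "1.IH" False unfolding l_def r_def by blast+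
    have "depth_ldt (sort_ldt E tie xs) \<le>
          depth_ldt (sort_ldt E tie l) + (depth_ldt (sort_ldt E tie r) + (length l + length r))"
      unfolding sort_ldt.simps[of E tie xs] using False
      by (auto simp flip: l_def r_def intro!: depth_bind_ldt_le order.trans[OF depth_merge_ldt_le]
               dest!: length_set2_sort_ldt)
    also have "\<dots> \<le> (length l + length r) * L"
      using IH L' by (simp add: add_mult_distrib)
    finally show ?thesis
      by (simp add: l_def r_def)
  qed
qed

lemma k_linear_sort_ldt:
  "(\<And>u w. length (snd (E u w)) \<le> k) \<Longrightarrow> k_linear k (sort_ldt E tie xs)"
proof (induction E tie xs rule: sort_ldt.induct)
  case (1 E tie xs)
  then show ?case
    unfolding sort_ldt.simps[of E tie xs] by (auto intro!: k_linear_bind_ldt k_linear_merge_ldt)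
qed

definition before :: "'a list \<Rightarrow> 'a \<Rightarrow> 'a \<Rightarrow> bool" where
  "before xs a b \<longleftrightarrow> (\<exists>ys zs. xs = ys @ zs \<and> a \<in> set ys \<and> b \<in> set zs)"

lemma before_Cons:
  "before (c # xs) a b \<longleftrightarrow> (a = c \<and> b \<in> set xs) \<or> before xs a b"
proof
  assume "before (c # xs) a b"
  then obtain ys zs where "c # xs = ys @ zs" "a \<in> set ys" "b \<in> set zs"
    by (auto simp: before_def)
  then show "(a = c \<and> b \<in> set xs) \<or> before xs a b"
    by (cases ys) (auto simp: before_def)
next
  assume "(a = c \<and> b \<in> set xs) \<or> before xs a b"
  then show "before (c # xs) a b"
    unfolding before_def by (metis append_Cons append_Nil list.set_intros(1,2))
qed

lemma before_or_before:
  "a \<in> set xs \<Longrightarrow> b \<in> set xs \<Longrightarrow> a \<noteq> b \<Longrightarrow> before xs a b \<or> before xs b a"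
  by (induction xs) (auto simp: before_Cons)

lemma sorted_wrt_before: "sorted_wrt R xs \<Longrightarrow> before xs a b \<Longrightarrow> R a b"
  by (auto simp: before_def sorted_wrt_append)

lemma before_iff_sorted_wrt:
  assumes "sorted_wrt R xs" "a \<in> set xs" "b \<in> set xs" "a \<noteq> b" "R a b \<longleftrightarrow> \<not> R b a"
  shows "before xs a b \<longleftrightarrow> R a b"
  using assms before_or_before[OF assms(2-4)] sorted_wrt_before[OF assms(1)] by blast

(* The item (i, False) stands for the value p_i k and (i, True) for p_i k + \<delta>. *)
definition shifted_diff :: "nat \<Rightarrow> real \<Rightarrow> nat \<times> bool \<Rightarrow> nat \<times> bool \<Rightarrow> (nat \<times> nat) lin_expr" where
  "shifted_diff k \<delta> u w =
     ((if snd u then \<delta> else 0) - (if snd w then \<delta> else 0), [((fst u, k), 1), ((fst w, k), -1)])"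

definition unshifted_first :: "nat \<times> bool \<Rightarrow> nat \<times> bool \<Rightarrow> bool" where
  "unshifted_first u w \<longleftrightarrow> (snd u \<longrightarrow> snd w)"

definition coord_close_ldt :: "nat \<Rightarrow> real \<Rightarrow> nat \<Rightarrow> (nat \<times> nat, (nat \<times> nat) set) ldt" where
  "coord_close_ldt n \<delta> k =
     bind_ldt (sort_ldt (shifted_diff k \<delta>) unshifted_first (List.product [0..<n] [False, True]))
       (\<lambda>xs. Leaf {(i, j). i < n \<and> j < n \<and> before xs (i, False) (j, True)})"

lemma branch_le_shifted_diff:
  "branch_le (shifted_diff k \<delta>) unshifted_first (\<lambda>(i, k). p i k) (i, a) (j, b) \<longleftrightarrow>
     p i k + (if a then \<delta> else 0) < p j k + (if b then \<delta> else 0) \<or>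
     (p i k + (if a then \<delta> else 0) = p j k + (if b then \<delta> else 0) \<and> (a \<longrightarrow> b))"
  by (auto simp: branch_le_def lin_val_def shifted_diff_def unshifted_first_def)

lemma eval_coord_close_ldt:
  "eval_ldt (\<lambda>(i, k). p i k) (coord_close_ldt n \<delta> k) = {(i, j). i < n \<and> j < n \<and> p i k \<le> p j k + \<delta>}"
proof -
  let ?x = "\<lambda>(i, k). p i k"
  let ?R = "branch_le (shifted_diff k \<delta>) unshifted_first ?x"
  let ?xs = "eval_ldt ?x (sort_ldt (shifted_diff k \<delta>) unshifted_first (List.product [0..<n] [False, True]))"
  have "\<And>a b. ?R a b \<or> ?R b a" "transp ?R"
    by (auto simp: branch_le_shifted_diff transp_def split_paired_all)
  from eval_sort_ldt[OF this] have "set ?xs = {..<n} \<times> UNIV" "sorted_wrt ?R ?xs"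
    by (auto simp: UNIV_bool)
  moreover have "?R (i, False) (j, True) \<longleftrightarrow> \<not> ?R (j, True) (i, False)"
      "?R (i, False) (j, True) \<longleftrightarrow> p i k \<le> p j k + \<delta>" for i j
    by (auto simp: branch_le_shifted_diff)
  ultimately have "before ?xs (i, False) (j, True) \<longleftrightarrow> p i k \<le> p j k + \<delta>" if "i < n" "j < n" for i j
    using before_iff_sorted_wrt[of ?R ?xs "(i, False)" "(j, True)"] that by auto
  then show ?thesis
    by (auto simp: coord_close_ldt_def eval_bind_ldt)
qed

lemma depth_coord_close_ldt_le: "2 * n \<le> 2 ^ L \<Longrightarrow> depth_ldt (coord_close_ldt n \<delta> k) \<le> 2 * n * L"
  using depth_sort_ldt_le[of "List.product [0..<n] [False, True]" L] by (simp add: coord_close_ldt_def mult_2)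

lemma k_linear_coord_close_ldt: "k_linear 2 (coord_close_ldt n \<delta> k)"
  unfolding coord_close_ldt_def
  by (auto intro!: k_linear_bind_ldt k_linear_sort_ldt simp: shifted_diff_def)

primrec sequence_ldt :: "('v, 'a) ldt list \<Rightarrow> ('v, 'a list) ldt" where
  "sequence_ldt [] = Leaf []"
| "sequence_ldt (T # Ts) = bind_ldt T (\<lambda>a. bind_ldt (sequence_ldt Ts) (\<lambda>as. Leaf (a # as)))"

lemma eval_sequence_ldt: "eval_ldt x (sequence_ldt Ts) = map (eval_ldt x) Ts"
  by (induction Ts) (auto simp: eval_bind_ldt)

lemma depth_sequence_ldt_le:
  "(\<And>T. T \<in> set Ts \<Longrightarrow> depth_ldt T \<le> m) \<Longrightarrow> depth_ldt (sequence_ldt Ts) \<le> length Ts * m"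
proof (induction Ts)
  case (Cons T Ts)
  have "depth_ldt (sequence_ldt (T # Ts)) \<le> depth_ldt T + length Ts * m"
    using Cons by (auto intro: depth_bind_ldt_le)
  with Cons.prems show ?case by fastforce
qed simp

lemma k_linear_sequence_ldt: "(\<And>T. T \<in> set Ts \<Longrightarrow> k_linear k T) \<Longrightarrow> k_linear k (sequence_ldt Ts)"
  by (induction Ts) (auto intro!: k_linear_bind_ldt)

lemma linf_dist_le_iff:
  assumes "d \<ge> 1"
  shows "linf_dist d x y \<le> \<delta> \<longleftrightarrow> (\<forall>k<d. \<bar>x k - y k\<bar> \<le> \<delta>)"
proof -
  have "(\<lambda>k. \<bar>x k - y k\<bar>) ` {..<d} \<noteq> {}"
    using assms by (auto simp: lessThan_empty_iff)
  then show ?thesis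
    unfolding linf_dist_def by (subst Max_le_iff) auto
qed

definition close_pairs_ldt :: "nat \<Rightarrow> nat \<Rightarrow> real \<Rightarrow> (nat \<times> nat, (nat \<times> nat) set) ldt" where
  "close_pairs_ldt d n \<delta> =
     bind_ldt (sequence_ldt (map (coord_close_ldt n \<delta>) [0..<d]))
       (\<lambda>Gs. Leaf {(i, j). i < n \<and> j < n \<and> i \<noteq> j \<and> (\<forall>k<d. (i, j) \<in> Gs ! k \<and> (j, i) \<in> Gs ! k)})"

lemma eval_close_pairs_ldt:
  assumes "d \<ge> 1"
  shows "eval_ldt (\<lambda>(i, k). p i k) (close_pairs_ldt d n \<delta>) =
           {(i, j). i < n \<and> j < n \<and> i \<noteq> j \<and> linf_dist d (p i) (p j) \<le> \<delta>}"
  by (auto simp: close_pairs_ldt_def eval_bind_ldt eval_sequence_ldt eval_coord_close_ldt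
                 linf_dist_le_iff[OF assms] abs_le_iff algebra_simps)

lemma depth_close_pairs_ldt_le:
  assumes "2 * n \<le> 2 ^ L"
  shows "depth_ldt (close_pairs_ldt d n \<delta>) \<le> d * (2 * n * L)"
proof -
  have "depth_ldt (sequence_ldt (map (coord_close_ldt n \<delta>) [0..<d])) \<le> d * (2 * n * L)"
    using depth_sequence_ldt_le[of "map (coord_close_ldt n \<delta>) [0..<d]" "2 * n * L"]
      depth_coord_close_ldt_le[OF assms] by auto
  then show ?thesis
    by (simp add: close_pairs_ldt_def)
qed

lemma k_linear_close_pairs_ldt: "k_linear 2 (close_pairs_ldt d n \<delta>)"
  by (auto simp: close_pairs_ldt_def intro!: k_linear_bind_ldt k_linear_sequence_ldt k_linear_coord_close_ldt)

lemma floor_log_bound: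
  fixes n :: nat
  assumes "n \<ge> 2"
  shows "2 * n \<le> 2 ^ (floor_log n + 2)" and "real (floor_log n + 2) \<le> 3 * ln (real n) / ln 2"
proof -
  show "2 * n \<le> 2 ^ (floor_log n + 2)"
    using floor_log_exp2_gt[of n] by simp
  have "1 \<le> log 2 (real n)"
    using assms by simp
  moreover have "real (floor_log n) \<le> log 2 (real n)"
    using assms by (simp add: floor_log_altdef)
  ultimately have "real (floor_log n + 2) \<le> 3 * log 2 (real n)"
    by simp
  then show "real (floor_log n + 2) \<le> 3 * ln (real n) / ln 2"
    by (simp add: log_def)
qed

theorem corollary1:
  "\<exists>C::real. C > 0 \<and>
     (\<forall>(d::nat) (n::nat) (\<delta>::real). d \<ge> 1 \<longrightarrow> n \<ge> 2 \<longrightarrow> \<delta> > 0 \<longrightarrow>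
       (\<exists>T :: (nat \<times> nat, (nat \<times> nat) set) ldt.
          k_linear 2 T \<and>
          real (depth_ldt T) \<le> C * real d * real n * ln (real n) \<and>
          (\<forall>p :: nat \<Rightarrow> nat \<Rightarrow> real.
             eval_ldt (\<lambda>(i, k). p i k) T =
               {(i, j). i < n \<and> j < n \<and> i \<noteq> j \<and> linf_dist d (p i) (p j) \<le> \<delta>})))"
proof (intro exI[of _ "6 / ln 2"] conjI allI impI)
  fix d n :: nat and \<delta> :: real
  assume "d \<ge> 1" "n \<ge> 2" "\<delta> > 0"
  define L where "L = floor_log n + 2"
  have "real (depth_ldt (close_pairs_ldt d n \<delta>)) \<le> real (d * (2 * n * L))"
    using depth_close_pairs_ldt_le[OF floor_log_bound(1)[OF \<open>n \<ge> 2\<close>]] by (simp only: L_def of_nat_le_iff)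
  also have "\<dots> = real d * (2 * real n * real L)"
    by simp
  also have "\<dots> \<le> real d * (2 * real n * (3 * ln (real n) / ln 2))"
    using floor_log_bound(2)[OF \<open>n \<ge> 2\<close>] by (intro mult_left_mono) (auto simp: L_def)
  also have "\<dots> = 6 / ln 2 * real d * real n * ln (real n)"
    by simp
  finally show "\<exists>T. k_linear 2 T \<and> real (depth_ldt T) \<le> 6 / ln 2 * real d * real n * ln (real n) \<and>
      (\<forall>p. eval_ldt (\<lambda>(i, k). p i k) T =
             {(i, j). i < n \<and> j < n \<and> i \<noteq> j \<and> linf_dist d (p i) (p j) \<le> \<delta>})"
    using k_linear_close_pairs_ldt eval_close_pairs_ldt[OF \<open>d \<ge> 1\<close>] by blast
qed simp

end
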